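(* Let $g\ge0$, $n\ge1$ with $2-2g-n<0$, and let $\Gamma$ be a trivalent ribbon graph of type $(g,n)$ with edges labelled $1,\dots,6g-6+3n$. Then the oriented adjacency matrix $B$ of $\Gamma$ (a $(6g-6+3n)\times(6g-6+3n)$ skew-symmetric integer matrix) has rank $6g-6+2n$.
   Context: A ribbon graph of type $(g,n)$ is a finite connected graph (loops and multiple edges allowed), all vertices of degree $\ge3$, with a cyclic ordering of the half-edges at each vertex, whose thickening according to these cyclic orderings is an oriented surface of genus $g$ with $n$ boundary components (faces); it is trivalent if all vertices have degree $3$, in which case it has $6g-6+3n$ edges. Let $H$ be the set of half-edges, $s_0:H\to H$ the permutation sending a half-edge to the next half-edge at the same vertex in the (anticlockwise) cyclic order, and $e(h)$ the edge containing $h$. The oriented adjacency matrix is defined by \[B_{ij}=\sum_{h\in H,\ e(h)=i}\Big([e(s_0h)=j]-[e(s_0^{-1}h)=j]\Big),\] where $[\cdot]$ is $1$ if the condition holds and $0$ otherwise; thus $B_{ij}=0$ if edges $i,j$ are not adjacent or $i=j$, and otherwise $B_{ij}$ counts, with signs $\pm1$ determined by the cyclic order, the vertices at which edge $j$ follows or precedes edge $i$ (the paper fixes this sign convention by a diagram; the opposite overall sign gives the same rank). *)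

theory Defs
  imports "HOL-Analysis.Analysis"
begin

text \<open>Half-edges form a finite type 'h, edges a finite
  type 'e. The map e sends a half-edge to its edge (every edge has exactly two
  half-edges), and s0 is the permutation of half-edges giving the next half-edge
  at the same vertex in the cyclic order.\<close>

definition perm_orbit :: "('h \<Rightarrow> 'h) \<Rightarrow> 'h \<Rightarrow> 'h set" where
  "perm_orbit f h = {(f ^^ k) h | k. True}"

definition num_orbits :: "('h \<Rightarrow> 'h) \<Rightarrow> nat" where
  "num_orbits f = card (range (perm_orbit f))"

definition other_half :: "('h \<Rightarrow> 'e) \<Rightarrow> 'h \<Rightarrow> 'h" where
  "other_half e h = (THE h'. h' \<noteq> h \<and> e h' = e h)"

text \<open>Vertices are s0-orbits, edges are the edge labels, faces (boundary components
  of the thickening) are the orbits of s0 composed with s1.\<close>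
definition num_vertices :: "('h \<Rightarrow> 'h) \<Rightarrow> nat" where
  "num_vertices s0 = num_orbits s0"

definition num_faces :: "('h \<Rightarrow> 'h) \<Rightarrow> ('h \<Rightarrow> 'e) \<Rightarrow> nat" where
  "num_faces s0 e = num_orbits (s0 \<circ> other_half e)"

definition ribbon_graph :: "('h::finite \<Rightarrow> 'h) \<Rightarrow> ('h \<Rightarrow> 'e::finite) \<Rightarrow> bool" where
  "ribbon_graph s0 e \<longleftrightarrow>
     bij s0 \<and>
     (\<forall>x. card (e -` {x}) = 2) \<and>
     (\<forall>h. card (perm_orbit s0 h) \<ge> 3) \<and>
     (\<forall>h h'. (h, h') \<in> ({(a, s0 a) | a. True} \<union> {(a, b). e a = e b})\<^sup>*)"

definition trivalent_ribbon_graph :: "('h::finite \<Rightarrow> 'h) \<Rightarrow> ('h \<Rightarrow> 'e::finite) \<Rightarrow> bool" where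
  "trivalent_ribbon_graph s0 e \<longleftrightarrow> ribbon_graph s0 e \<and> (\<forall>h. card (perm_orbit s0 h) = 3)"

definition ribbon_type :: "('h::finite \<Rightarrow> 'h) \<Rightarrow> ('h \<Rightarrow> 'e::finite) \<Rightarrow> nat \<Rightarrow> nat \<Rightarrow> bool" where
  "ribbon_type s0 e g n \<longleftrightarrow>
     num_faces s0 e = n \<and>
     int (num_vertices s0) - int CARD('e) + int (num_faces s0 e) = 2 - 2 * int g"

definition oriented_adjacency :: "('h::finite \<Rightarrow> 'h) \<Rightarrow> ('h \<Rightarrow> 'e::finite) \<Rightarrow> rat ^ 'e ^ 'e" where
  "oriented_adjacency s0 e = (\<chi> i j. of_int (\<Sum>h\<in>{h. e h = i}.
      (if e (s0 h) = j then 1 else 0) - (if e (inv s0 h) = j then 1 else 0)))"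

end

theory Submission
  imports Defs "HOL-Combinatorics.Orbits"
begin

(* The matrix B acts by (B x)(e h) = d x h + d x (s1 h), where d x h = x (e (s0 h)) - x (e (s0 (s0 h)))
   is a difference around the vertex of h. Its kernel is the image, under k \<mapsto> (edge \<mapsto> sum of k over
   its two half-edges), of the vectors on half-edges that are constant along the boundary components
   (orbits of s0 \<circ> s1), and this map is injective there; so the nullity of B is n. As B is
   skew-symmetric its rank is the dimension of its range, i.e. E - n, and 3 V = 2 E together with
   V - E + n = 2 - 2 g gives E = 6 g - 6 + 3 n. *)

lemma bij_imp_permutation:
  fixes f :: "'a::finite \<Rightarrow> 'a"
  assumes "bij f"
  shows "permutation f"
  using permutation_lemma[of UNIV f] assms by simp

lemma perm_orbit_eq_orbit:
  assumes "permutation f"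
  shows "perm_orbit f = orbit f"
  using orbit_altdef_permutation[OF assms] by (auto simp: perm_orbit_def)

lemma num_orbits_eq_card_orbits:
  assumes "permutation f"
  shows "num_orbits f = card (range (orbit f))"
  by (simp add: num_orbits_def perm_orbit_eq_orbit[OF assms])

lemma orbit_eq_iff_mem_orbit:
  assumes "permutation f"
  shows "orbit f y = orbit f x \<longleftrightarrow> y \<in> orbit f x"
  by (metis assms cyclic_on_orbit' orbit_cyclic_eq3 permutation_self_in_orbit)

lemma funpow_card_orbit:
  assumes "permutation f"
  shows "(f ^^ card (orbit f x)) x = x"
proof -
  have x: "x \<in> orbit f x" by (rule permutation_self_in_orbit[OF assms])
  have "card (orbit f x) = funpow_dist1 f x x"
    using orbit_conv_funpow_dist1[OF x] inj_on_funpow_dist1[OF x] by (simp add: card_image)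
  then show ?thesis using funpow_dist1_prop[OF x] by simp
qed

lemma mult_card_orbits_eq_CARD:
  fixes f :: "'a::finite \<Rightarrow> 'a"
  assumes "permutation f" and "\<And>x. card (orbit f x) = k"
  shows "k * card (range (orbit f)) = CARD('a)"
proof -
  have "k * card (range (orbit f)) = card (\<Union> (range (orbit f)))"
  proof (rule card_partition)
    show "c1 \<inter> c2 = {}" if "c1 \<in> range (orbit f)" "c2 \<in> range (orbit f)" "c1 \<noteq> c2" for c1 c2
      using that orbit_eq_iff_mem_orbit[OF assms(1)] by blast
  qed (use assms(2) in auto)
  also have "\<Union> (range (orbit f)) = UNIV"
    using permutation_self_in_orbit[OF assms(1)] by blast
  finally show ?thesis .
qed

definition invariant_vectors :: "('h \<Rightarrow> 'h) \<Rightarrow> ('a::zero ^ 'h) set" where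
  "invariant_vectors f = {k. \<forall>h. k $ f h = k $ h}"

definition indicator_vector :: "'h set \<Rightarrow> 'a::{zero,one} ^ 'h" where
  "indicator_vector S = (\<chi> h. if h \<in> S then 1 else 0)"

lemma mem_range_orbit_iff:
  assumes "permutation f" and "S \<in> range (orbit f)"
  shows "x \<in> S \<longleftrightarrow> S = orbit f x"
proof -
  obtain y where "S = orbit f y" using assms(2) by blast
  then show ?thesis using orbit_eq_iff_mem_orbit[OF assms(1), of x y] by auto
qed

lemma sum_orbits_containing:
  fixes f :: "'h::finite \<Rightarrow> 'h"
  assumes "permutation f"
  shows "(\<Sum>S\<in>range (orbit f). if x \<in> S then g S else 0) = g (orbit f x)"
proof -
  have "(\<Sum>S\<in>range (orbit f). if x \<in> S then g S else 0)
      = (\<Sum>S\<in>range (orbit f). if S = orbit f x then g S else 0)"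
    using mem_range_orbit_iff[OF assms] by (intro sum.cong) auto
  then show ?thesis by simp
qed

lemma invariant_vector_const_on_orbit:
  assumes "k \<in> invariant_vectors f" and "y \<in> orbit f x"
  shows "k $ y = k $ x"
  using assms(2) by induction (use assms(1) in \<open>auto simp: invariant_vectors_def\<close>)

lemma vec_subspace_invariant_vectors: "vec.subspace (invariant_vectors f)"
  unfolding vec.subspace_def invariant_vectors_def by auto

lemma vec_span_invariant_vectors: "vec.span (invariant_vectors f) = invariant_vectors f"
  using vec_subspace_invariant_vectors by (rule vec.span_eq_iff[THEN iffD2])

lemma indicator_vector_orbit_invariant:
  assumes "permutation f"
  shows "indicator_vector (orbit f x) \<in> invariant_vectors f"
proof -
  have "f h \<in> orbit f x \<longleftrightarrow> h \<in> orbit f x" for h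
    using orbit_eq_iff_mem_orbit[OF assms, of "f h" x] orbit_eq_iff_mem_orbit[OF assms, of h x]
      permutation_orbit_step[OF assms, of h] by simp
  then show ?thesis by (simp add: invariant_vectors_def indicator_vector_def)
qed

lemma inj_on_indicator_vector_orbits:
  fixes f :: "'h::finite \<Rightarrow> 'h"
  assumes f: "permutation f"
  shows "inj_on (indicator_vector :: 'h set \<Rightarrow> 'a::zero_neq_one ^ 'h) (range (orbit f))"
proof (rule inj_onI)
  let ?Ind = "indicator_vector :: 'h set \<Rightarrow> 'a ^ 'h"
  fix S T assume "S \<in> range (orbit f)" and T: "T \<in> range (orbit f)" and "?Ind S = ?Ind T"
  then obtain x where x: "S = orbit f x" by auto
  have "?Ind S $ x = 1"
    using permutation_self_in_orbit[OF f] by (simp add: x indicator_vector_def)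
  then have "?Ind T $ x = 1" using \<open>?Ind S = ?Ind T\<close> by simp
  then have "x \<in> T" by (simp add: indicator_vector_def split: if_splits)
  then show "S = T" using mem_range_orbit_iff[OF f T] x by simp
qed

lemma invariant_vectors_subset_span_indicators:
  fixes f :: "'h::finite \<Rightarrow> 'h"
  assumes f: "permutation f"
  shows "invariant_vectors f \<subseteq> vec.span (indicator_vector ` range (orbit f) :: ('a::field ^ 'h) set)"
proof
  let ?I = "indicator_vector ` range (orbit f) :: ('a ^ 'h) set"
  fix k :: "'a ^ 'h" assume k: "k \<in> invariant_vectors f"
  let ?restrict = "\<lambda>S. \<chi> h. if h \<in> S then k $ h else 0"
  have "k = (\<Sum>S\<in>range (orbit f). ?restrict S)"
    by (simp add: vec_eq_iff sum_component sum_orbits_containing[OF f])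
  also have "\<dots> \<in> vec.span ?I"
  proof (rule vec.span_sum)
    fix S assume S: "S \<in> range (orbit f)"
    then obtain x where x: "S = orbit f x" by auto
    have "?restrict S = k $ x *s indicator_vector S"
      using invariant_vector_const_on_orbit[OF k] by (auto simp: x vec_eq_iff indicator_vector_def)
    moreover have "indicator_vector S \<in> vec.span ?I" using S by (intro vec.span_base) simp
    ultimately show "?restrict S \<in> vec.span ?I" by (simp add: vec.span_scale)
  qed
  finally show "k \<in> vec.span ?I" .
qed

lemma independent_indicator_vector_orbits:
  fixes f :: "'h::finite \<Rightarrow> 'h"
  assumes f: "permutation f"
  shows "vec.independent (indicator_vector ` range (orbit f) :: ('a::field ^ 'h) set)"
  unfolding vec.independent_explicit
proof (intro conjI allI impI ballI)
  let ?Ind = "indicator_vector :: 'h set \<Rightarrow> 'a ^ 'h"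
  let ?I = "?Ind ` range (orbit f)"
  fix c v assume sum0: "(\<Sum>v\<in>?I. c v *s v) = 0" and "v \<in> ?I"
  then obtain x where v: "v = ?Ind (orbit f x)" by auto
  have "(\<Sum>v\<in>?I. c v *s v) $ x = (\<Sum>S\<in>range (orbit f). c (?Ind S) * ?Ind S $ x)"
    by (simp add: sum_component sum.reindex[OF inj_on_indicator_vector_orbits[OF f]])
  also have "\<dots> = (\<Sum>S\<in>range (orbit f). if x \<in> S then c (?Ind S) else 0)"
    by (intro sum.cong) (simp_all add: indicator_vector_def)
  also have "\<dots> = c v"
    by (simp add: sum_orbits_containing[OF f] v)
  finally have "(\<Sum>v\<in>?I. c v *s v) $ x = c v" .
  then show "c v = 0" by (simp only: sum0 zero_index)
qed simp

lemma dim_invariant_vectors: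
  fixes f :: "'h::finite \<Rightarrow> 'h"
  assumes f: "permutation f"
  shows "vec.dim (invariant_vectors f :: ('a::field ^ 'h) set) = card (range (orbit f))"
proof -
  have "card (indicator_vector ` range (orbit f) :: ('a ^ 'h) set)
      = vec.dim (invariant_vectors f :: ('a ^ 'h) set)"
    using indicator_vector_orbit_invariant[OF f] invariant_vectors_subset_span_indicators[OF f]
      independent_indicator_vector_orbits[OF f]
    by (intro vec.basis_card_eq_dim) auto
  moreover have "card (indicator_vector ` range (orbit f) :: ('a ^ 'h) set) = card (range (orbit f))"
    by (rule card_image[OF inj_on_indicator_vector_orbits[OF f]])
  ultimately show ?thesis by simp
qed

context vector_space
begin

lemma span_inter_span_disjoint_subsets_eq_0:
  assumes "independent B" and "C \<subseteq> B" and "K \<subseteq> B" and "C \<inter> K = {}"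
    and "u \<in> span C" and "u \<in> span K"
  shows "u = 0"
proof -
  have rep0: "representation B u b = 0" for b
  proof -
    have eqs: "representation B u b = representation C u b" "representation B u b = representation K u b"
      using representation_extend[OF assms(1) assms(5,2)] representation_extend[OF assms(1) assms(6,3)]
      by simp_all
    show ?thesis
    proof (rule ccontr)
      assume "representation B u b \<noteq> 0"
      then have "b \<in> C" "b \<in> K" using eqs representation_ne_zero by metis+
      then show False using assms(4) by blast
    qed
  qed
  have "u \<in> span B" using assms(3,6) span_mono by blast
  then have "u = (\<Sum>b | representation B u b \<noteq> 0. representation B u b *s b)"
    by (rule sum_nonzero_representation_eq[OF assms(1), symmetric])
  then show ?thesis by (simp add: rep0)
qed

end

context finite_dimensional_vector_space_pair_1
begin

lemma inj_on_span_complement_of_kernel: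
  assumes lf: "Vector_Spaces.linear s1 s2 f"
    and "vs1.independent B" and "K \<subseteq> B" and "{x. f x = 0} \<subseteq> vs1.span K"
  shows "inj_on f (vs1.span (B - K))"
proof (rule inj_onI)
  interpret lf: Vector_Spaces.linear s1 s2 f by (rule lf)
  fix u v assume uv: "u \<in> vs1.span (B - K)" "v \<in> vs1.span (B - K)" "f u = f v"
  have "u - v \<in> vs1.span (B - K)" using uv by (simp add: vs1.span_diff)
  moreover have "u - v \<in> vs1.span K" using uv(3) assms(4) by (auto simp: lf.diff)
  ultimately have "u - v = 0"
    by (rule vs1.span_inter_span_disjoint_subsets_eq_0[OF assms(2), rotated 3]) (use assms(3) in auto)
  then show "u = v" by simp
qed

lemma dim_range_add_dim_kernel:
  assumes lf: "Vector_Spaces.linear s1 s2 f"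
  shows "vs2.dim (range f) + vs1.dim {x. f x = 0} = vs1.dim UNIV"
proof -
  interpret lf: Vector_Spaces.linear s1 s2 f by (rule lf)
  let ?N = "{x. f x = 0}"
  obtain K where K: "K \<subseteq> ?N" "vs1.independent K" "?N \<subseteq> vs1.span K" "card K = vs1.dim ?N"
    by (rule vs1.basis_exists)
  obtain B where B: "K \<subseteq> B" "vs1.independent B" "UNIV \<subseteq> vs1.span B"
    using vs1.maximal_independent_subset_extend[OF subset_UNIV K(2)] by metis
  have "finite B" using B(2) by (rule vs1.finiteI_independent)
  have "vs1.span B = UNIV" using B(3) by blast
  then have "range f = vs2.span (f ` B)" by (metis lf.span_image)
  also have "\<dots> = vs2.span (f ` (B - K))"
  proof -
    have "f ` B \<subseteq> insert 0 (f ` (B - K))" using K(1) by auto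
    then have "vs2.span (f ` B) \<subseteq> vs2.span (f ` (B - K))"
      by (metis vs2.span_insert_0 vs2.span_mono)
    moreover have "vs2.span (f ` (B - K)) \<subseteq> vs2.span (f ` B)"
      by (rule vs2.span_mono) auto
    ultimately show ?thesis by blast
  qed
  finally have "vs2.dim (range f) = vs1.dim (B - K)"
    using dim_image_eq[OF lf inj_on_span_complement_of_kernel[OF lf B(2,1) K(3)]]
    by (simp add: vs2.dim_span)
  also have "\<dots> = card B - card K"
    using vs1.dim_eq_card_independent vs1.independent_mono[OF B(2)] \<open>finite B\<close> B(1)
    by (simp add: card_Diff_subset finite_subset)
  moreover have "card B = vs1.dim UNIV"
    using vs1.basis_card_eq_dim[OF subset_UNIV B(3,2)] .
  moreover have "card K \<le> card B" using card_mono[OF \<open>finite B\<close> B(1)] .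
  ultimately show ?thesis using K(4) by linarith
qed

end

lemma axis_vector_matrix_mult: "axis i (1::'a::field) v* A = row i A"
  by (simp add: vec_eq_iff vector_matrix_mult_def axis_def row_def if_distrib[where f="\<lambda>x. x * _"]
      cong: if_cong)

lemma rank_eq_dim_range_transpose: "rank A = vec.dim (range ((*v) (transpose A)))"
proof -
  have "rows A = (*v) (transpose A) ` cart_basis"
    unfolding rows_def cart_basis_def Setcompr_eq_image image_image
    by (simp add: axis_vector_matrix_mult)
  then have "vec.span (rows A) = (*v) (transpose A) ` vec.span cart_basis"
    by (simp only: vec.span_image)
  then have "vec.span (rows A) = range ((*v) (transpose A))"
    by (simp only: span_cart_basis)
  then show ?thesis
    unfolding row_rank_def_gen by (metis vec.dim_span)
qed

lemma rank_skew_symmetric: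
  fixes A :: "'a::field ^ 'n ^ 'n"
  assumes "\<And>i j. A $ i $ j = - A $ j $ i"
  shows "rank A = vec.dim (range ((*v) A))"
proof -
  have "transpose A $ i $ j = (- A) $ i $ j" for i j
    using assms[of j i] by (simp add: transpose_def)
  then have "transpose A = - A" by (simp add: vec_eq_iff)
  moreover have "(*v) (- A) = (*v) A \<circ> uminus"
    by (simp add: fun_eq_iff vec_eq_iff matrix_vector_mult_def sum_negf)
  ultimately have "range ((*v) (transpose A)) = range ((*v) A)"
    by (metis image_comp surj_uminus)
  then show ?thesis by (simp add: rank_eq_dim_range_transpose)
qed

definition edge_sums :: "('h::finite \<Rightarrow> 'e) \<Rightarrow> 'a::comm_monoid_add ^ 'h \<Rightarrow> 'a ^ 'e" where
  "edge_sums e k = (\<chi> i. \<Sum>h | e h = i. k $ h)"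

lemma linear_edge_sums:
  "Vector_Spaces.linear (*s) (*s) (edge_sums e :: 'a::field ^ 'h::finite \<Rightarrow> 'a ^ 'e)"
  by unfold_locales (simp_all add: edge_sums_def vec_eq_iff sum.distrib sum_distrib_left)

lemma oriented_adjacency_eq_card:
  assumes "bij s0"
  shows "oriented_adjacency s0 e $ i $ j
    = of_nat (card {h. e h = i \<and> e (s0 h) = j}) - of_nat (card {h. e h = j \<and> e (s0 h) = i})"
proof -
  have "bij_betw (inv s0) {h. e h = i \<and> e (inv s0 h) = j} {h. e h = j \<and> e (s0 h) = i}"
    by (rule bij_betw_byWitness[where f' = s0])
      (use assms in \<open>auto simp: inv_f_f[OF bij_is_inj] surj_f_inv_f[OF bij_is_surj]\<close>)
  then have "card {h. e h = i \<and> e (inv s0 h) = j} = card {h. e h = j \<and> e (s0 h) = i}"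
    by (rule bij_betw_same_card)
  then show ?thesis
    unfolding oriented_adjacency_def
    by (simp add: sum_subtractf sum.inter_filter[symmetric] conj_commute)
qed

lemma oriented_adjacency_skew:
  assumes "bij s0"
  shows "oriented_adjacency s0 e $ i $ j = - oriented_adjacency s0 e $ j $ i"
  by (simp add: oriented_adjacency_eq_card[OF assms])

lemma oriented_adjacency_mult:
  "(oriented_adjacency s0 e *v x) $ i = (\<Sum>h | e h = i. x $ e (s0 h) - x $ e (inv s0 h))"
proof -
  have entry: "oriented_adjacency s0 e $ i $ j * x $ j
      = (\<Sum>h | e h = i. (if e (s0 h) = j then x $ j else 0) - (if e (inv s0 h) = j then x $ j else 0))"
    for j
    unfolding oriented_adjacency_def
    by (simp add: of_int_sum sum_distrib_right left_diff_distrib) (rule sum.cong; simp)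
  have "(oriented_adjacency s0 e *v x) $ i
      = (\<Sum>j\<in>UNIV. \<Sum>h | e h = i.
          (if e (s0 h) = j then x $ j else 0) - (if e (inv s0 h) = j then x $ j else 0))"
    unfolding matrix_vector_mult_def by (simp add: entry)
  also have "\<dots> = (\<Sum>h | e h = i. x $ e (s0 h) - x $ e (inv s0 h))"
    by (subst sum.swap) (simp add: sum_subtractf)
  finally show ?thesis .
qed

locale trivalent_ribbon =
  fixes s0 :: "'h::finite \<Rightarrow> 'h" and e :: "'h \<Rightarrow> 'e::finite"
  assumes s0_cube [simp]: "s0 (s0 (s0 h)) = h"
    and card_edge_fiber: "card (e -` {i}) = 2"
begin

abbreviation s1 :: "'h \<Rightarrow> 'h" where "s1 \<equiv> other_half e"

abbreviation face_perm :: "'h \<Rightarrow> 'h" where "face_perm \<equiv> s0 \<circ> s1"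

abbreviation adjacency :: "rat ^ 'e ^ 'e" where "adjacency \<equiv> oriented_adjacency s0 e"

lemma ex1_other_half: "\<exists>!h'. h' \<noteq> h \<and> e h' = e h"
proof -
  obtain a b where ab: "e -` {e h} = {a, b}" "a \<noteq> b"
    using card_edge_fiber[of "e h"] by (auto simp: card_2_iff)
  then have fiber: "e z = e h \<longleftrightarrow> z = a \<or> z = b" for z by blast
  consider "h = a" | "h = b" using fiber[of h] by blast
  then show ?thesis
  proof cases
    case 1 then show ?thesis using fiber ab(2) by (intro ex1I[of _ b]) auto
  next
    case 2 then show ?thesis using fiber ab(2) by (intro ex1I[of _ a]) auto
  qed
qed

lemma other_half_neq: "s1 h \<noteq> h" and e_other_half [simp]: "e (s1 h) = e h"
  using theI'[OF ex1_other_half[of h]] unfolding other_half_def by auto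

lemma edge_fiber: "{z. e z = e h} = {h, s1 h}"
  using ex1_other_half[of h] other_half_neq[of h] e_other_half[of h] by blast

lemma other_half_other_half [simp]: "s1 (s1 h) = h"
proof -
  have "s1 (s1 h) \<in> {z. e z = e h}" by simp
  then have "s1 (s1 h) = h \<or> s1 (s1 h) = s1 h" unfolding edge_fiber by blast
  then show ?thesis using other_half_neq[of "s1 h"] by blast
qed

lemma ex_half_edge: "\<exists>h. e h = i"
  using card_edge_fiber[of i] by (metis card.empty vimage_singleton_eq empty_iff ex_in_conv zero_neq_numeral)

lemma card_half_edges: "CARD('h) = 2 * CARD('e)"
proof -
  have "CARD('h) = card (\<Union>i. e -` {i})" by (rule arg_cong[where f = card]) blast
  also have "\<dots> = (\<Sum>i\<in>UNIV. card (e -` {i}))"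
    by (rule card_UN_disjoint) auto
  finally show ?thesis by (simp add: card_edge_fiber)
qed

lemma bij_s0: "bij s0"
  by (rule o_bij[of "s0 \<circ> s0"]) (simp_all add: fun_eq_iff)

lemma inv_s0: "inv s0 h = s0 (s0 h)"
  by (rule inv_f_eq[OF bij_is_inj[OF bij_s0]]) simp

lemma permutation_face_perm: "permutation face_perm"
proof -
  have "bij s1" by (rule o_bij[of s1]) (simp_all add: fun_eq_iff)
  then show ?thesis by (intro bij_imp_permutation bij_comp bij_s0)
qed

lemma edge_sums_edge: "edge_sums e k $ e h = k $ h + k $ s1 h"
  unfolding edge_sums_def using other_half_neq[of h] by (simp add: edge_fiber)

lemma adjacency_mult_edge:
  "(adjacency *v x) $ e h
    = (x $ e (s0 h) - x $ e (s0 (s0 h))) + (x $ e (s0 (s1 h)) - x $ e (s0 (s0 (s1 h))))"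
  unfolding oriented_adjacency_mult edge_fiber inv_s0 using other_half_neq[of h] by simp

lemma face_invariant_s0_eq_s1:
  assumes "k \<in> invariant_vectors face_perm"
  shows "k $ s0 h = k $ s1 h"
proof -
  have "k $ face_perm (s1 h) = k $ s1 h" using assms unfolding invariant_vectors_def by blast
  then show ?thesis by simp
qed

lemma edge_sums_vertex_diff:
  fixes k :: "'a::ab_group_add ^ 'h"
  assumes "k \<in> invariant_vectors face_perm"
  shows "edge_sums e k $ e (s0 h) - edge_sums e k $ e (s0 (s0 h)) = k $ s1 h - k $ h"
  using face_invariant_s0_eq_s1[OF assms, of h] face_invariant_s0_eq_s1[OF assms, of "s0 h"]
    face_invariant_s0_eq_s1[OF assms, of "s0 (s0 h)"]
  by (simp add: edge_sums_edge)

lemma adjacency_edge_sums_face_invariant: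
  assumes "k \<in> invariant_vectors face_perm"
  shows "adjacency *v edge_sums e k = 0"
proof -
  have "(adjacency *v edge_sums e k) $ e h = 0" for h
    unfolding adjacency_mult_edge edge_sums_vertex_diff[OF assms] by simp
  then have "(adjacency *v edge_sums e k) $ i = 0" for i using ex_half_edge[of i] by blast
  then show ?thesis by (simp add: vec_eq_iff)
qed

lemma kernel_adjacency_subset:
  assumes "adjacency *v x = 0"
  shows "x \<in> edge_sums e ` invariant_vectors face_perm"
proof -
  \<comment> \<open>For face-invariant k, edge_sums e k at e h is k h + k (s0 h); solving x = edge_sums e k
    at the three corners h, s0 h, s0 (s0 h) of a vertex gives this k.\<close>
  define k :: "rat ^ 'h" where "k = (\<chi> h. (x $ e h + x $ e (s0 (s0 h)) - x $ e (s0 h)) / 2)"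
  have ker: "x $ e (s0 h) - x $ e (s0 (s0 h)) + (x $ e (s0 (s1 h)) - x $ e (s0 (s0 (s1 h)))) = 0" for h
    using adjacency_mult_edge[of x h] assms by simp
  have "k $ face_perm h = k $ h" for h
    using ker[of h] by (simp add: k_def field_simps)
  then have "k \<in> invariant_vectors face_perm" by (simp add: invariant_vectors_def)
  moreover have "edge_sums e k = x"
  proof -
    have "edge_sums e k $ e h = x $ e h" for h
      using ker[of h] by (simp add: edge_sums_edge k_def field_simps)
    then have "edge_sums e k $ i = x $ i" for i using ex_half_edge[of i] by blast
    then show ?thesis by (simp add: vec_eq_iff)
  qed
  ultimately show ?thesis by blast
qed

lemma inj_on_edge_sums_face_invariant:
  "inj_on (edge_sums e) (invariant_vectors face_perm :: (rat ^ 'h) set)"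
proof -
  interpret edge_sums: Vector_Spaces.linear "(*s)" "(*s)" "edge_sums e :: rat ^ 'h \<Rightarrow> rat ^ 'e"
    by (rule linear_edge_sums)
  have trivial_kernel: "k = 0"
    if k: "k \<in> invariant_vectors face_perm" and "edge_sums e k = 0" for k :: "rat ^ 'h"
  proof -
    have vertex: "k $ h + k $ s0 h = 0" for h
      using arg_cong[OF \<open>edge_sums e k = 0\<close>, of "\<lambda>v. v $ e h"]
        face_invariant_s0_eq_s1[OF k, of h]
      by (simp add: edge_sums_edge)
    have "k $ h = 0" for h
      using vertex[of h] vertex[of "s0 h"] vertex[of "s0 (s0 h)"] by simp
    then show ?thesis by (simp add: vec_eq_iff)
  qed
  show ?thesis
  proof (rule inj_onI)
    fix a b :: "rat ^ 'h"
    assume a: "a \<in> invariant_vectors face_perm" and b: "b \<in> invariant_vectors face_perm"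
      and "edge_sums e a = edge_sums e b"
    have "a - b \<in> invariant_vectors face_perm"
      using a b by (rule vec.subspace_diff[OF vec_subspace_invariant_vectors])
    moreover have "edge_sums e (a - b) = 0"
      using \<open>edge_sums e a = edge_sums e b\<close> by (simp add: edge_sums.diff)
    ultimately have "a - b = 0" by (rule trivial_kernel)
    then show "a = b" by simp
  qed
qed

lemma kernel_adjacency: "{x. adjacency *v x = 0} = edge_sums e ` invariant_vectors face_perm"
  using kernel_adjacency_subset adjacency_edge_sums_face_invariant by blast

lemma rank_adjacency_add_num_faces: "rank adjacency + num_faces s0 e = CARD('e)"
proof -
  have "vec.dim {x. adjacency *v x = 0} = vec.dim (invariant_vectors face_perm :: (rat ^ 'h) set)"
    unfolding kernel_adjacency
    using inj_on_edge_sums_face_invariant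
    by (intro vec.dim_image_eq[OF linear_edge_sums]) (simp add: vec_span_invariant_vectors)
  also have "\<dots> = num_faces s0 e"
    by (simp add: dim_invariant_vectors permutation_face_perm num_faces_def
        num_orbits_eq_card_orbits)
  finally have "vec.dim {x. adjacency *v x = 0} = num_faces s0 e" .
  moreover have "rank adjacency = vec.dim (range ((*v) adjacency))"
    by (rule rank_skew_symmetric) (rule oriented_adjacency_skew[OF bij_s0])
  moreover have "vec.dim (range ((*v) adjacency)) + vec.dim {x. adjacency *v x = 0} = CARD('e)"
    using vec.dim_range_add_dim_kernel[OF matrix_vector_mul_linear_gen, of adjacency]
    by (simp add: card_cart_basis)
  ultimately show ?thesis by simp
qed

end

lemma trivalent_ribbon_graph_imp_trivalent_ribbon:
  assumes "trivalent_ribbon_graph s0 e"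
  shows "trivalent_ribbon s0 e"
proof
  have "bij s0" and orbit3: "card (perm_orbit s0 h) = 3" for h
    using assms by (auto simp: trivalent_ribbon_graph_def ribbon_graph_def)
  have "permutation s0" using \<open>bij s0\<close> by (rule bij_imp_permutation)
  show "s0 (s0 (s0 h)) = h" for h
    using funpow_card_orbit[OF \<open>permutation s0\<close>, of h] orbit3[of h]
    by (simp add: perm_orbit_eq_orbit[OF \<open>permutation s0\<close>] numeral_eq_Suc)
  show "card (e -` {i}) = 2" for i
    using assms by (simp add: trivalent_ribbon_graph_def ribbon_graph_def)
qed

theorem lemma4p3:
  fixes s0 :: "'h::finite \<Rightarrow> 'h" and e :: "'h \<Rightarrow> 'e::finite" and g n :: nat
  assumes "trivalent_ribbon_graph s0 e"
    and "ribbon_type s0 e g n"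
    and "n \<ge> 1"
    and "2 - 2 * int g - int n < 0"
  shows "int (rank (oriented_adjacency s0 e)) = 6 * int g - 6 + 2 * int n"
proof -
  interpret trivalent_ribbon s0 e
    using assms(1) by (rule trivalent_ribbon_graph_imp_trivalent_ribbon)
  have perm: "permutation s0" using bij_s0 by (rule bij_imp_permutation)
  have "card (orbit s0 h) = 3" for h
    using assms(1) by (simp add: trivalent_ribbon_graph_def perm_orbit_eq_orbit[OF perm])
  then have vertices: "3 * num_vertices s0 = CARD('h)"
    by (simp add: num_vertices_def num_orbits_eq_card_orbits[OF perm] mult_card_orbits_eq_CARD[OF perm])
  have faces: "num_faces s0 e = n"
    and euler: "int (num_vertices s0) - int CARD('e) + int n = 2 - 2 * int g"
    using assms(2) by (simp_all add: ribbon_type_def)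
  have "int (rank adjacency) + int n = int CARD('e)"
    using rank_adjacency_add_num_faces faces by simp
  moreover have "3 * int (num_vertices s0) = 2 * int CARD('e)"
    using vertices card_half_edges by linarith
  ultimately show ?thesis using euler by linarith
qed

end
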